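(* Let $S$ be a nonempty set of graphs on $\Pi$. Then $\mathrm{eqdom}(S)$-set agreement is solvable in one round on the closed-above model generated by $\mathrm{Sym}(S)$.
   Context: Fix a set of $n$ processes $\Pi=\{p_1,\dots,p_n\}$. A graph is a directed graph with vertex set $\Pi$; every graph is assumed to contain all self-loops $(p,p)$. For a graph $G$ and $p\in\Pi$, $Out_G(p)=\{q:(p,q)\in E(G)\}$ and $In_G(p)=\{q:(q,p)\in E(G)\}$; for $P\subseteq\Pi$, $Out_G(P)=\bigcup_{p\in P}Out_G(p)$. Computation proceeds in failure-free, communication-closed rounds: in each round $r$ a graph $G_r$ is chosen and each process $p$ receives in round $r$ exactly the round-$r$ messages of the processes in $In_{G_r}(p)$. A communication model is a set of infinite sequences of graphs; an execution is allowed iff its sequence of round graphs belongs to the model. For a graph $G$, $\uparrow G=\{H: E(H)\supseteq E(G)\}$. The closed-above model generated by a set $S$ of graphs is $(\bigcup_{G\in S}\uparrow G)^\omega$. For a set $S$ of graphs, $\mathrm{Sym}(S)=\{\pi(G): G\in S,\ \pi:\Pi\to\Pi \text{ a permutation}\}$, where $\pi(G)$ has edges $\{(\pi(u),\pi(v)):(u,v)\in E(G)\}$. In $k$-set agreement each process starts with an input from a totally ordered set $V_{in}$ and must decide a value so that every decided value is the input of some process and at most $k$ distinct values are decided; it is solvable in $r$ rounds on a model if some algorithm guarantees this, with all processes deciding after $r$ rounds, in every allowed execution and for every input assignment. For a graph $G$, $\mathrm{eqdom}(G)=\min\{i\in[1,n]: \forall P\subseteq\Pi,\ |P|=i\Rightarrow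 Out_G(P)=\Pi\}$, and $\mathrm{eqdom}(S)=\max_{G\in S}\mathrm{eqdom}(G)$. *)

theory Defs
  imports Main
begin

text \<open>Processes are the elements of a finite type 'p (so n = CARD('p)).
  A graph is its edge set, a relation on 'p containing all self-loops.\<close>

type_synonym 'p graph = "('p \<times> 'p) set"

definition is_graph :: "'p graph \<Rightarrow> bool" where
  "is_graph G \<longleftrightarrow> Id \<subseteq> G"

definition Out :: "'p graph \<Rightarrow> 'p \<Rightarrow> 'p set" where
  "Out G p = {q. (p, q) \<in> G}"

definition In :: "'p graph \<Rightarrow> 'p \<Rightarrow> 'p set" where
  "In G p = {q. (q, p) \<in> G}"

definition OutSet :: "'p graph \<Rightarrow> 'p set \<Rightarrow> 'p set" where
  "OutSet G P = (\<Union>p\<in>P. Out G p)"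

definition up :: "'p graph \<Rightarrow> 'p graph set" where
  "up G = {H. is_graph H \<and> G \<subseteq> H}"

definition closed_above_model :: "'p graph set \<Rightarrow> (nat \<Rightarrow> 'p graph) set" where
  "closed_above_model S = {seq. \<forall>r. seq r \<in> (\<Union>G\<in>S. up G)}"

definition perm_graph :: "('p \<Rightarrow> 'p) \<Rightarrow> 'p graph \<Rightarrow> 'p graph" where
  "perm_graph \<pi> G = (\<lambda>(u, v). (\<pi> u, \<pi> v)) ` G"

definition Sym :: "'p graph set \<Rightarrow> 'p graph set" where
  "Sym S = {perm_graph \<pi> G | \<pi> G. G \<in> S \<and> bij \<pi>}"

definition eqdom_graph :: "'p::finite graph \<Rightarrow> nat" where
  "eqdom_graph G = (LEAST i. 1 \<le> i \<and> i \<le> card (UNIV :: 'p set) \<and>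
      (\<forall>P::'p set. card P = i \<longrightarrow> OutSet G P = UNIV))"

definition eqdom :: "'p::finite graph set \<Rightarrow> nat" where
  "eqdom S = Max (eqdom_graph ` S)"

text \<open>One-round (full-information) algorithms: each process broadcasts its input
  in round 1; after round 1 process p has received exactly the inputs of the
  processes in In G p, represented as a partial map, and decides via dec.\<close>
definition view :: "'p graph \<Rightarrow> ('p \<Rightarrow> 'v) \<Rightarrow> 'p \<Rightarrow> ('p \<Rightarrow> 'v option)" where
  "view G x p = (\<lambda>q. if q \<in> In G p then Some (x q) else None)"

definition solves_kset_one_round ::
  "nat \<Rightarrow> (nat \<Rightarrow> 'p graph) set \<Rightarrow> ('p \<Rightarrow> ('p \<Rightarrow> 'v option) \<Rightarrow> 'v) \<Rightarrow> bool" where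
  "solves_kset_one_round k M dec \<longleftrightarrow>
     (\<forall>seq\<in>M. \<forall>x :: 'p \<Rightarrow> 'v.
        (\<forall>p. dec p (view (seq 0) x p) \<in> range x) \<and>
        card (range (\<lambda>p. dec p (view (seq 0) x p))) \<le> k)"

definition kset_solvable_one_round ::
  "nat \<Rightarrow> (nat \<Rightarrow> 'p graph) set \<Rightarrow> 'v itself \<Rightarrow> bool" where
  "kset_solvable_one_round k M _ \<longleftrightarrow>
     (\<exists>dec :: 'p \<Rightarrow> ('p \<Rightarrow> 'v option) \<Rightarrow> 'v. solves_kset_one_round k M dec)"

end

theory Submission
  imports Defs
begin

text \<open>Every process decides the smallest input it received. If more than k = eqdom S
  values were decided, take k processes whose inputs are decided values below the largest
  decided value m. In any round graph of the model these k processes reach every process,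
  in particular one that decided m; that process has then received an input smaller than
  m, a contradiction. Permuting a graph does not change which set sizes dominate it, and
  adding edges only helps.\<close>

lemma OutSet_mono: "G \<subseteq> H \<Longrightarrow> P \<subseteq> Q \<Longrightarrow> OutSet G P \<subseteq> OutSet H Q"
  by (auto simp: OutSet_def Out_def)

lemma OutSet_perm_graph:
  assumes "bij \<pi>"
  shows "OutSet (perm_graph \<pi> G) (\<pi> ` P) = \<pi> ` OutSet G P"
proof -
  have "inj \<pi>" using assms by (rule bij_is_inj)
  then show ?thesis
    by (auto simp: OutSet_def Out_def perm_graph_def inj_eq) blast
qed

lemma OutSet_eqdom_graph:
  fixes G :: "'p::finite graph"
  assumes "is_graph G" and "card P = eqdom_graph G"
  shows "OutSet G P = UNIV"
proof -
  let ?dominating = "\<lambda>i. 1 \<le> i \<and> i \<le> card (UNIV :: 'p set) \<and>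
      (\<forall>P::'p set. card P = i \<longrightarrow> OutSet G P = UNIV)"
  have "?dominating (card (UNIV :: 'p set))"
  proof (intro conjI allI impI)
    show "1 \<le> card (UNIV :: 'p set)"
      by (simp add: Suc_le_eq card_gt_0_iff)
    fix P :: "'p set"
    assume "card P = card (UNIV :: 'p set)"
    then have "P = UNIV" by (simp add: card_subset_eq)
    then show "OutSet G P = UNIV"
      using assms(1) by (auto simp: OutSet_def Out_def is_graph_def)
  qed simp
  then have "?dominating (eqdom_graph G)"
    unfolding eqdom_graph_def by (rule LeastI)
  with assms(2) show ?thesis by blast
qed

lemma OutSet_perm_graph_eq_UNIV:
  fixes G :: "'p::finite graph"
  assumes "is_graph G" and "bij \<pi>" and "eqdom_graph G \<le> card P"
  shows "OutSet (perm_graph \<pi> G) P = UNIV"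
proof -
  have inj_inv: "inj (inv \<pi>)" using assms(2) by (simp add: bij_imp_bij_inv bij_is_inj)
  obtain P' where "P' \<subseteq> P" and card_P': "card P' = eqdom_graph G"
    using assms(3) by (metis obtain_subset_with_card_n)
  have "card (inv \<pi> ` P') = eqdom_graph G"
    using card_P' inj_inv by (simp add: card_image inj_on_subset)
  then have "OutSet G (inv \<pi> ` P') = UNIV"
    by (rule OutSet_eqdom_graph[OF assms(1)])
  moreover have "\<pi> ` inv \<pi> ` P' = P'"
    using assms(2) by (simp add: image_image bij_is_surj surj_f_inv_f)
  ultimately have "OutSet (perm_graph \<pi> G) P' = UNIV"
    using OutSet_perm_graph[OF assms(2), of G "inv \<pi> ` P'"] assms(2)
    by (simp add: bij_is_surj)
  then show ?thesis
    using OutSet_mono[OF order_refl \<open>P' \<subseteq> P\<close>] by blast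
qed

lemma card_range_Min_In_le:
  fixes H :: "'p::finite graph" and x :: "'p \<Rightarrow> 'v::linorder"
  assumes self_loop: "\<And>p. p \<in> In H p"
    and dominating: "\<And>P. card P = k \<Longrightarrow> OutSet H P = UNIV"
  shows "card (range (\<lambda>p. Min (x ` In H p))) \<le> k"
proof (rule ccontr)
  define d where "d p = Min (x ` In H p)" for p
  define D where "D = range d"
  define m where "m = Max D"
  have "d p \<in> x ` In H p" for p
    unfolding d_def using self_loop[of p] by (intro Min_in) auto
  then have d_in_range: "d p \<in> range x" for p by blast
  assume "\<not> card (range (\<lambda>p. Min (x ` In H p))) \<le> k"
  then have "k < card D" by (simp add: D_def d_def)
  moreover have "m \<in> D" unfolding m_def D_def by (intro Max_in) auto
  ultimately have "k \<le> card (D - {m})" by simp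
  then obtain D0 where D0: "D0 \<subseteq> D - {m}" "card D0 = k"
    by (metis obtain_subset_with_card_n)
  have D0_range: "D0 \<subseteq> range x" using D0(1) d_in_range by (auto simp: D_def)
  define P where "P = inv x ` D0"
  have "card P = k"
    unfolding P_def using D0(2) D0_range by (simp add: card_image inj_on_inv_into)
  then have "OutSet H P = UNIV" by (rule dominating)
  obtain q where "d q = m" using \<open>m \<in> D\<close> by (auto simp: D_def)
  have "q \<in> OutSet H P" using \<open>OutSet H P = UNIV\<close> by simp
  then obtain p where "p \<in> P" and "p \<in> In H q" by (auto simp: OutSet_def Out_def In_def)
  have "x p \<in> D0" using \<open>p \<in> P\<close> D0_range by (auto simp: P_def f_inv_into_f)
  then have "x p \<le> m" and "x p \<noteq> m" using D0(1) by (auto simp: m_def D_def)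
  then have "x p < m" by simp
  moreover have "d q \<le> x p" unfolding d_def using \<open>p \<in> In H q\<close> by simp
  ultimately show False using \<open>d q = m\<close> by simp
qed

lemma closed_above_model_Sym_round:
  assumes "seq \<in> closed_above_model (Sym S)"
  obtains G \<pi> where "G \<in> S" "bij \<pi>" "perm_graph \<pi> G \<subseteq> seq r" "is_graph (seq r)"
proof -
  have "seq r \<in> (\<Union>G\<in>Sym S. up G)" using assms by (simp add: closed_above_model_def)
  then show ?thesis using that by (auto simp: Sym_def up_def)
qed

lemma OutSet_closed_above_model_Sym_eq_UNIV:
  fixes S :: "'p::finite graph set"
  assumes "\<forall>G\<in>S. is_graph G" and "seq \<in> closed_above_model (Sym S)"
    and "card P = eqdom S"
  shows "OutSet (seq r) P = UNIV"
proof -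
  obtain G \<pi> where "G \<in> S" "bij \<pi>" and sub: "perm_graph \<pi> G \<subseteq> seq r"
    using assms(2) by (rule closed_above_model_Sym_round)
  have "eqdom_graph G \<le> card P"
    using \<open>G \<in> S\<close> assms(3) by (simp add: eqdom_def)
  then have "OutSet (perm_graph \<pi> G) P = UNIV"
    using assms(1) \<open>G \<in> S\<close> \<open>bij \<pi>\<close> by (simp add: OutSet_perm_graph_eq_UNIV)
  then show ?thesis using OutSet_mono[OF sub order_refl] by blast
qed

lemma ran_view: "ran (view G x p) = x ` In G p"
  by (auto simp: view_def ran_def)

theorem mainTheorem3:
  fixes S :: "'p::finite graph set"
  assumes "S \<noteq> {}"
    and "\<forall>G\<in>S. is_graph G"
  shows "kset_solvable_one_round (eqdom S) (closed_above_model (Sym S)) TYPE('v::linorder)"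
  unfolding kset_solvable_one_round_def solves_kset_one_round_def
proof (intro exI[of _ "\<lambda>p v. Min (ran v)"] ballI allI conjI, unfold ran_view)
  fix seq and x :: "'p \<Rightarrow> 'v"
  assume model: "seq \<in> closed_above_model (Sym S)"
  then have "is_graph (seq 0)" by (blast elim: closed_above_model_Sym_round)
  then have self_loop: "p \<in> In (seq 0) p" for p by (auto simp: In_def is_graph_def)
  have "Min (x ` In (seq 0) p) \<in> x ` In (seq 0) p" for p
    using self_loop[of p] by (intro Min_in) auto
  then show "Min (x ` In (seq 0) p) \<in> range x" for p by blast
  show "card (range (\<lambda>p. Min (x ` In (seq 0) p))) \<le> eqdom S"
    using self_loop OutSet_closed_above_model_Sym_eq_UNIV[OF assms(2) model]
    by (rule card_range_Min_In_le)
qed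

end
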